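(* Let $k, m \in \mathbb N$ with $k \ge 2$, and let $\phi \colon \mathcal H_{2k}^0 \to M_m$ be a real linear map with $\phi(\mathcal{IH}_{2k}^0) \subset \mathcal U_m$. Let $H \in \mathcal{IH}_{2(k-2)}^0$, $K \in \mathcal H_2\cap\mathcal U_2$, $Z \in \mathcal U_2$, $T \in M_{2(k-1),2}$ and $V \in M_{2(k-1),2(k-2)}$ be such that the block matrix $\begin{bmatrix} V & T\end{bmatrix} \in \mathcal U_{2(k-1)}$. Then $$\left|\phi\!\left(\begin{bmatrix} & TZ \\ Z^\ast T^\ast & \end{bmatrix}\right)\right|^2 = \left|\phi\!\left(TKT^\ast \oplus (-Z^\ast K Z)\right)\right|^2 = I_m - \left|\phi\!\left(VHV^\ast \oplus 0_2\right)\right|^2$$ and $$\operatorname{Re}\!\left(\phi\!\left(TKT^\ast \oplus (-Z^\ast KZ)\right)^\ast\, \phi\!\left(\begin{bmatrix} & TZ \\ Z^\ast T^\ast & \end{bmatrix}\right)\right) = 0_m.$$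
   Context: $M_{p,q}$ is the set of $p\times q$ complex matrices, $M_m = M_{m,m}$, $\mathcal U_n$ the $n\times n$ unitary matrices, $\mathcal H_n$ the $n\times n$ complex hermitian matrices, $\mathcal H_n^0$ the trace-zero ones, $\mathcal{IH}_n^0 = \mathcal H_n^0\cap\mathcal U_n$ (for $n=0$ these are the empty matrices). The block matrix $\begin{bmatrix} & TZ \\ Z^\ast T^\ast & \end{bmatrix}$ is the $2k\times 2k$ matrix with zero diagonal blocks of sizes $2(k-1)$ and $2$. $|A| = (A^\ast A)^{1/2}$, $\operatorname{Re}A = \tfrac12(A+A^\ast)$, $\oplus$ is block-diagonal sum. *)

theory Defs
  imports "Jordan_Normal_Form.Matrix"
begin

definition adj :: "complex mat \<Rightarrow> complex mat" where
  "adj A = mat (dim_col A) (dim_row A) (\<lambda>(i,j). cnj (A $$ (j,i)))"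

definition mtrace :: "complex mat \<Rightarrow> complex" where
  "mtrace A = (\<Sum>i<dim_row A. A $$ (i,i))"

definition unitary_mat :: "nat \<Rightarrow> complex mat \<Rightarrow> bool" where
  "unitary_mat n U \<longleftrightarrow> U \<in> carrier_mat n n \<and> adj U * U = 1\<^sub>m n \<and> U * adj U = 1\<^sub>m n"

definition hermitian_mat :: "nat \<Rightarrow> complex mat \<Rightarrow> bool" where
  "hermitian_mat n A \<longleftrightarrow> A \<in> carrier_mat n n \<and> adj A = A"

definition H0 :: "nat \<Rightarrow> complex mat set" where
  "H0 n = {A. hermitian_mat n A \<and> mtrace A = 0}"

definition IH0 :: "nat \<Rightarrow> complex mat set" where
  "IH0 n = {A. A \<in> H0 n \<and> unitary_mat n A}"

definition dsum :: "complex mat \<Rightarrow> complex mat \<Rightarrow> complex mat" where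
  "dsum A B = four_block_mat A (0\<^sub>m (dim_row A) (dim_col B)) (0\<^sub>m (dim_row B) (dim_col A)) B"

definition hcat :: "complex mat \<Rightarrow> complex mat \<Rightarrow> complex mat" where
  "hcat A B = mat (dim_row A) (dim_col A + dim_col B)
     (\<lambda>(i,j). if j < dim_col A then A $$ (i,j) else B $$ (i, j - dim_col A))"

text \<open>|A|^2 = ((A^* A)^(1/2))^2 = A^* A.\<close>
definition abs_sq :: "complex mat \<Rightarrow> complex mat" where
  "abs_sq A = adj A * A"

definition re_mat :: "complex mat \<Rightarrow> complex mat" where
  "re_mat A = (1/2 :: complex) \<cdot>\<^sub>m (A + adj A)"

definition real_linear_on_H0 :: "nat \<Rightarrow> nat \<Rightarrow> (complex mat \<Rightarrow> complex mat) \<Rightarrow> bool" where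
  "real_linear_on_H0 n m \<phi> \<longleftrightarrow>
     (\<forall>A \<in> H0 n. \<phi> A \<in> carrier_mat m m) \<and>
     (\<forall>A \<in> H0 n. \<forall>B \<in> H0 n. \<forall>a b :: real.
        \<phi> (complex_of_real a \<cdot>\<^sub>m A + complex_of_real b \<cdot>\<^sub>m B)
          = complex_of_real a \<cdot>\<^sub>m \<phi> A + complex_of_real b \<cdot>\<^sub>m \<phi> B)"

end

theory Submission
  imports Defs
begin

(* Put A = diag(V H V^*, 0), B = diag(T K T^*, -Z^* K Z) and C = [0, T Z; Z^* T^*, 0].
   All three are trace-zero hermitian, A^2 + B^2 = I, C^2 = B^2, A annihilates B and C on both
   sides, and B anticommutes with C.  Hence A + x B + y C is a trace-zero hermitian involution
   whenever x^2 + y^2 = 1, and by real linearity phi(A) + x phi(B) + y phi(C) is unitary on the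
   whole unit circle.  Its unitarity condition is a quadratic polynomial identity in (x, y) on
   the circle; comparing coefficients gives |phi(C)|^2 = |phi(B)|^2 = I - |phi(A)|^2 and
   Re(phi(B)^* phi(C)) = 0. *)

section \<open>Matrix algebra\<close>

lemma adj_dims [simp]: "dim_row (adj A) = dim_col A" "dim_col (adj A) = dim_row A"
  by (simp_all add: adj_def)

lemma index_adj [simp]: "i < dim_col A \<Longrightarrow> j < dim_row A \<Longrightarrow> adj A $$ (i, j) = cnj (A $$ (j, i))"
  by (simp add: adj_def)

lemma adj_carrier_mat [simp]: "A \<in> carrier_mat r c \<Longrightarrow> adj A \<in> carrier_mat c r"
  unfolding carrier_mat_def by simp

lemma adj_adj [simp]: "adj (adj A) = A"
  by (rule eq_matI) simp_all

lemma adj_zero [simp]: "adj (0\<^sub>m r c) = 0\<^sub>m c r"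
  by (rule eq_matI) simp_all

lemma adj_mult: "dim_col A = dim_row B \<Longrightarrow> adj (A * B) = adj B * adj A"
  by (rule eq_matI) (simp_all add: scalar_prod_def mult.commute)

lemma adj_add: "dim_row A = dim_row B \<Longrightarrow> dim_col A = dim_col B \<Longrightarrow> adj (A + B) = adj A + adj B"
  by (rule eq_matI) simp_all

lemma adj_smult: "adj (c \<cdot>\<^sub>m A) = cnj c \<cdot>\<^sub>m adj A"
  by (rule eq_matI) simp_all

lemma adj_uminus: "adj (- A) = - adj A"
  by (rule eq_matI) simp_all

lemma adj_four_block_mat:
  assumes "A \<in> carrier_mat r1 c1" "B \<in> carrier_mat r1 c2" "C \<in> carrier_mat r2 c1" "D \<in> carrier_mat r2 c2"
  shows "adj (four_block_mat A B C D) = four_block_mat (adj A) (adj C) (adj B) (adj D)"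
  by (rule eq_matI) (use assms in auto)

lemma mtrace_zero [simp]: "mtrace (0\<^sub>m n n) = 0"
  by (simp add: mtrace_def)

lemma mtrace_add: "A \<in> carrier_mat n n \<Longrightarrow> B \<in> carrier_mat n n \<Longrightarrow> mtrace (A + B) = mtrace A + mtrace B"
  by (simp add: mtrace_def sum.distrib)

lemma mtrace_smult: "A \<in> carrier_mat n n \<Longrightarrow> mtrace (c \<cdot>\<^sub>m A) = c * mtrace A"
  by (simp add: mtrace_def sum_distrib_left)

lemma mtrace_uminus: "A \<in> carrier_mat n n \<Longrightarrow> mtrace (- A) = - mtrace A"
  by (simp add: mtrace_def sum_negf)

lemma mtrace_mult_comm:
  assumes "A \<in> carrier_mat n k" "B \<in> carrier_mat k n"
  shows "mtrace (A * B) = mtrace (B * A)"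
proof -
  have "mtrace (A * B) = (\<Sum>i<n. \<Sum>l<k. A $$ (i, l) * B $$ (l, i))"
    using assms by (simp add: mtrace_def scalar_prod_def atLeast0LessThan)
  also have "\<dots> = (\<Sum>l<k. \<Sum>i<n. B $$ (l, i) * A $$ (i, l))"
    by (subst sum.swap) (simp add: mult.commute)
  also have "\<dots> = mtrace (B * A)"
    using assms by (simp add: mtrace_def scalar_prod_def atLeast0LessThan)
  finally show ?thesis .
qed

lemma mtrace_four_block_mat:
  assumes "A \<in> carrier_mat r r" "B \<in> carrier_mat r s" "C \<in> carrier_mat s r" "D \<in> carrier_mat s s"
  shows "mtrace (four_block_mat A B C D) = mtrace A + mtrace D"
proof -
  have "(\<Sum>i<r + s. f i) = (\<Sum>i<r. f i) + (\<Sum>i<s. f (i + r))" for f :: "nat \<Rightarrow> complex"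
    by (induction s) (simp_all add: ac_simps)
  then show ?thesis
    using assms by (simp add: mtrace_def)
qed

lemma uminus_uminus_mat [simp]: "- (- A) = (A :: 'a :: group_add mat)"
  by (rule eq_matI) auto

lemma uminus_zero_mat [simp]: "- 0\<^sub>m r c = (0\<^sub>m r c :: 'a :: group_add mat)"
  by (rule eq_matI) auto

lemma add_uminus_cancel_mat: "(A :: 'a :: group_add mat) + - A = 0\<^sub>m (dim_row A) (dim_col A)"
  by (rule eq_matI) auto

lemma uminus_add_cancel_mat: "- (A :: 'a :: group_add mat) + A = 0\<^sub>m (dim_row A) (dim_col A)"
  by (rule eq_matI) auto

lemma mult_assoc_dims: "dim_col A = dim_row B \<Longrightarrow> dim_col B = dim_row C \<Longrightarrow> (A :: complex mat) * B * C = A * (B * C)"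
  by (rule assoc_mult_mat[of A "dim_row A" "dim_col A" B "dim_col B" C "dim_col C"]) auto

lemma mult_cancel_inverse_left:
  "A * B = 1\<^sub>m n \<Longrightarrow> dim_col A = dim_row B \<Longrightarrow> dim_row X = dim_col B \<Longrightarrow> (A :: complex mat) * (B * X) = X"
  by (metis mult_assoc_dims index_mult_mat(3) index_one_mat(3) left_mult_one_mat')

lemma mult_cancel_annihilator_left:
  "A * B = 0\<^sub>m r c \<Longrightarrow> dim_col A = dim_row B \<Longrightarrow> dim_row X = dim_col B \<Longrightarrow> (A :: complex mat) * (B * X) = 0\<^sub>m r (dim_col X)"
  by (metis mult_assoc_dims index_mult_mat(3) index_zero_mat(3) left_mult_zero_mat')

section \<open>Block matrices\<close>

lemma split_block_four_block_mat:
  assumes "A \<in> carrier_mat r1 c1" "B \<in> carrier_mat r1 c2" "C \<in> carrier_mat r2 c1" "D \<in> carrier_mat r2 c2"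
  shows "split_block (four_block_mat A B C D) r1 c1 = (A, B, C, D)"
  using assms unfolding split_block_def Let_def
  by (simp, intro conjI eq_matI) auto

lemma four_block_mat_eq_iff:
  assumes "A \<in> carrier_mat r1 c1" "B \<in> carrier_mat r1 c2" "C \<in> carrier_mat r2 c1" "D \<in> carrier_mat r2 c2"
    and "A' \<in> carrier_mat r1 c1" "B' \<in> carrier_mat r1 c2" "C' \<in> carrier_mat r2 c1" "D' \<in> carrier_mat r2 c2"
  shows "four_block_mat A B C D = four_block_mat A' B' C' D' \<longleftrightarrow> A = A' \<and> B = B' \<and> C = C' \<and> D = D'"
  by (metis split_block_four_block_mat[OF assms(1-4)] split_block_four_block_mat[OF assms(5-8)] prod.inject)

lemma dsum_eq_four_block_mat:
  "P \<in> carrier_mat r1 c1 \<Longrightarrow> Q \<in> carrier_mat r2 c2 \<Longrightarrow> dsum P Q = four_block_mat P (0\<^sub>m r1 c2) (0\<^sub>m r2 c1) Q"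
  unfolding dsum_def by auto

lemma dsum_one: "dsum (1\<^sub>m p) (1\<^sub>m q) = 1\<^sub>m (p + q)"
  unfolding dsum_def by simp

lemma dsum_zero: "dsum (0\<^sub>m p p) (0\<^sub>m q q) = 0\<^sub>m (p + q) (p + q)"
  unfolding dsum_def by simp

lemma add_dsum:
  assumes "P \<in> carrier_mat p p" "Q \<in> carrier_mat q q" "P' \<in> carrier_mat p p" "Q' \<in> carrier_mat q q"
  shows "dsum P Q + dsum P' Q' = dsum (P + P') (Q + Q')"
  using assms unfolding dsum_eq_four_block_mat[OF assms(1,2)] dsum_eq_four_block_mat[OF assms(3,4)]
  by (subst add_four_block_mat[OF assms(1) _ _ assms(2) assms(3) _ _ assms(4)])
    (auto simp: dsum_def)

lemma mult_dsum:
  assumes "P \<in> carrier_mat p p" "Q \<in> carrier_mat q q" "P' \<in> carrier_mat p p" "Q' \<in> carrier_mat q q"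
  shows "dsum P Q * dsum P' Q' = dsum (P * P') (Q * Q')"
  using assms unfolding dsum_eq_four_block_mat[OF assms(1,2)] dsum_eq_four_block_mat[OF assms(3,4)]
  by (subst mult_four_block_mat[OF assms(1) _ _ assms(2) assms(3) _ _ assms(4)])
    (auto simp: dsum_def)

lemma add_antidiag:
  fixes S S' R R' :: "complex mat"
  assumes "S \<in> carrier_mat p q" "S' \<in> carrier_mat q p" "R \<in> carrier_mat p q" "R' \<in> carrier_mat q p"
  shows "four_block_mat (0\<^sub>m p p) S S' (0\<^sub>m q q) + four_block_mat (0\<^sub>m p p) R R' (0\<^sub>m q q)
    = four_block_mat (0\<^sub>m p p) (S + R) (S' + R') (0\<^sub>m q q)"
  using assms by (subst add_four_block_mat[OF _ assms(1) assms(2) _ _ assms(3) assms(4)]) auto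

lemma mult_dsum_antidiag:
  assumes "P \<in> carrier_mat p p" "Q \<in> carrier_mat q q" "S \<in> carrier_mat p q" "S' \<in> carrier_mat q p"
  shows "dsum P Q * four_block_mat (0\<^sub>m p p) S S' (0\<^sub>m q q) = four_block_mat (0\<^sub>m p p) (P * S) (Q * S') (0\<^sub>m q q)"
  using assms unfolding dsum_eq_four_block_mat[OF assms(1,2)]
  by (subst mult_four_block_mat[OF assms(1) _ _ assms(2) _ assms(3) assms(4)]) auto

lemma mult_antidiag_dsum:
  assumes "P \<in> carrier_mat p p" "Q \<in> carrier_mat q q" "S \<in> carrier_mat p q" "S' \<in> carrier_mat q p"
  shows "four_block_mat (0\<^sub>m p p) S S' (0\<^sub>m q q) * dsum P Q = four_block_mat (0\<^sub>m p p) (S * Q) (S' * P) (0\<^sub>m q q)"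
  using assms unfolding dsum_eq_four_block_mat[OF assms(1,2)]
  by (subst mult_four_block_mat[OF _ assms(3) assms(4) _ assms(1) _ _ assms(2)]) auto

lemma mult_antidiag_antidiag:
  assumes "S \<in> carrier_mat p q" "S' \<in> carrier_mat q p" "R \<in> carrier_mat p q" "R' \<in> carrier_mat q p"
  shows "four_block_mat (0\<^sub>m p p) S S' (0\<^sub>m q q) * four_block_mat (0\<^sub>m p p) R R' (0\<^sub>m q q) = dsum (S * R') (S' * R)"
  using assms
  by (subst mult_four_block_mat[OF _ assms(1) assms(2) _ _ assms(3) assms(4)])
    (auto simp: dsum_eq_four_block_mat[of _ p p _ q q])

lemma hcat_eq_four_block_mat:
  "V \<in> carrier_mat n p \<Longrightarrow> T \<in> carrier_mat n q \<Longrightarrow> hcat V T = four_block_mat V T (0\<^sub>m 0 p) (0\<^sub>m 0 q)"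
  by (rule eq_matI) (auto simp: hcat_def)

lemma unitary_hcat_columns:
  assumes V: "V \<in> carrier_mat (p + q) p" and T: "T \<in> carrier_mat (p + q) q"
    and U: "unitary_mat (p + q) (hcat V T)"
  shows "adj V * V = 1\<^sub>m p" "adj V * T = 0\<^sub>m p q" "adj T * V = 0\<^sub>m q p" "adj T * T = 1\<^sub>m q"
proof -
  have "adj (hcat V T) * hcat V T = four_block_mat (adj V * V) (adj V * T) (adj T * V) (adj T * T)"
    unfolding hcat_eq_four_block_mat[OF V T]
      adj_four_block_mat[OF V T zero_carrier_mat zero_carrier_mat]
    using V T by (subst mult_four_block_mat[OF adj_carrier_mat[OF V] _ adj_carrier_mat[OF T] _ V T]) auto
  moreover have "adj (hcat V T) * hcat V T = four_block_mat (1\<^sub>m p) (0\<^sub>m p q) (0\<^sub>m q p) (1\<^sub>m q)"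
    using U unfolding unitary_mat_def by simp
  ultimately have blocks: "four_block_mat (adj V * V) (adj V * T) (adj T * V) (adj T * T)
      = four_block_mat (1\<^sub>m p) (0\<^sub>m p q) (0\<^sub>m q p) (1\<^sub>m q)"
    by simp
  have "adj V * V \<in> carrier_mat p p" "adj V * T \<in> carrier_mat p q"
    "adj T * V \<in> carrier_mat q p" "adj T * T \<in> carrier_mat q q"
    using V T by (meson adj_carrier_mat mult_carrier_mat)+
  from four_block_mat_eq_iff[OF this one_carrier_mat zero_carrier_mat zero_carrier_mat one_carrier_mat] blocks
  show "adj V * V = 1\<^sub>m p" "adj V * T = 0\<^sub>m p q" "adj T * V = 0\<^sub>m q p" "adj T * T = 1\<^sub>m q"
    by blast+
qed

lemma unitary_hcat_rows:
  assumes V: "V \<in> carrier_mat (p + q) p" and T: "T \<in> carrier_mat (p + q) q"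
    and U: "unitary_mat (p + q) (hcat V T)"
  shows "V * adj V + T * adj T = 1\<^sub>m (p + q)"
proof -
  have "hcat V T * adj (hcat V T)
      = four_block_mat (V * adj V + T * adj T) (0\<^sub>m (p + q) 0) (0\<^sub>m 0 (p + q)) (0\<^sub>m 0 0)"
    unfolding hcat_eq_four_block_mat[OF V T]
      adj_four_block_mat[OF V T zero_carrier_mat zero_carrier_mat]
    using V T by (subst mult_four_block_mat[OF V T _ _ adj_carrier_mat[OF V] _ adj_carrier_mat[OF T]]) auto
  also have "\<dots> = V * adj V + T * adj T"
    using V T by (intro eq_matI) auto
  finally show ?thesis
    using U unfolding unitary_mat_def by simp
qed

section \<open>Trace-zero hermitian matrices\<close>

lemma hermitian_uminus: "hermitian_mat n A \<Longrightarrow> hermitian_mat n (- A)"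
  by (simp add: hermitian_mat_def adj_uminus)

lemma hermitian_conj:
  assumes "hermitian_mat p H" "V \<in> carrier_mat n p"
  shows "hermitian_mat n (V * H * adj V)"
  using assms unfolding hermitian_mat_def
  by (auto simp: adj_mult mult_assoc_dims)

lemma mtrace_conj_isometry:
  assumes "H \<in> carrier_mat p p" "V \<in> carrier_mat n p" "adj V * V = 1\<^sub>m p"
  shows "mtrace (V * H * adj V) = mtrace H"
proof -
  have "mtrace (V * H * adj V) = mtrace (adj V * (V * H))"
    using assms by (intro mtrace_mult_comm) auto
  also have "\<dots> = mtrace H"
    using assms by (simp add: mult_cancel_inverse_left)
  finally show ?thesis .
qed

lemma dsum_H0:
  assumes "hermitian_mat p P" "hermitian_mat q Q" "mtrace P + mtrace Q = 0"
  shows "dsum P Q \<in> H0 (p + q)"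
proof -
  have P: "P \<in> carrier_mat p p" and Q: "Q \<in> carrier_mat q q"
    using assms unfolding hermitian_mat_def by auto
  show ?thesis
    using assms unfolding H0_def hermitian_mat_def dsum_eq_four_block_mat[OF P Q]
    by (simp add: adj_four_block_mat[OF P _ _ Q] mtrace_four_block_mat[OF P _ _ Q])
qed

lemma antidiag_H0:
  assumes "S \<in> carrier_mat p q"
  shows "four_block_mat (0\<^sub>m p p) S (adj S) (0\<^sub>m q q) \<in> H0 (p + q)"
  using assms unfolding H0_def hermitian_mat_def
  by (simp add: adj_four_block_mat[OF zero_carrier_mat assms adj_carrier_mat[OF assms] zero_carrier_mat]
      mtrace_four_block_mat[OF zero_carrier_mat assms adj_carrier_mat[OF assms] zero_carrier_mat])

lemma H0_real_lincomb:
  assumes "B \<in> H0 n" "C \<in> H0 n"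
  shows "complex_of_real x \<cdot>\<^sub>m B + complex_of_real y \<cdot>\<^sub>m C \<in> H0 n"
  using assms unfolding H0_def hermitian_mat_def
  by (auto simp: adj_add adj_smult mtrace_add[of _ n] mtrace_smult[of _ n])

lemma real_linear_on_H0_lincomb:
  assumes lin: "real_linear_on_H0 n m \<phi>" and "A \<in> H0 n" "B \<in> H0 n" "C \<in> H0 n"
  shows "\<phi> (A + complex_of_real x \<cdot>\<^sub>m B + complex_of_real y \<cdot>\<^sub>m C)
    = \<phi> A + complex_of_real x \<cdot>\<^sub>m \<phi> B + complex_of_real y \<cdot>\<^sub>m \<phi> C"
proof -
  have lin2: "\<phi> (complex_of_real a \<cdot>\<^sub>m X + complex_of_real b \<cdot>\<^sub>m Y)
      = complex_of_real a \<cdot>\<^sub>m \<phi> X + complex_of_real b \<cdot>\<^sub>m \<phi> Y" if "X \<in> H0 n" "Y \<in> H0 n" for X Y a b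
    using lin that unfolding real_linear_on_H0_def by blast
  have carrier: "A \<in> carrier_mat n n" "B \<in> carrier_mat n n" "C \<in> carrier_mat n n"
    "\<phi> A \<in> carrier_mat m m" "\<phi> B \<in> carrier_mat m m" "\<phi> C \<in> carrier_mat m m"
    using assms unfolding real_linear_on_H0_def H0_def hermitian_mat_def by auto
  have "A + complex_of_real x \<cdot>\<^sub>m B + complex_of_real y \<cdot>\<^sub>m C
      = complex_of_real 1 \<cdot>\<^sub>m A + complex_of_real 1 \<cdot>\<^sub>m (complex_of_real x \<cdot>\<^sub>m B + complex_of_real y \<cdot>\<^sub>m C)"
    using carrier by (intro eq_matI) auto
  also have "\<phi> \<dots> = complex_of_real 1 \<cdot>\<^sub>m \<phi> A
      + complex_of_real 1 \<cdot>\<^sub>m (complex_of_real x \<cdot>\<^sub>m \<phi> B + complex_of_real y \<cdot>\<^sub>m \<phi> C)"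
    using lin2[OF assms(2) H0_real_lincomb[OF assms(3,4)], of 1 1] lin2[OF assms(3,4), of x y] by simp
  also have "\<dots> = \<phi> A + complex_of_real x \<cdot>\<^sub>m \<phi> B + complex_of_real y \<cdot>\<^sub>m \<phi> C"
    using carrier by (intro eq_matI) auto
  finally show ?thesis .
qed

section \<open>A circle of trace-zero hermitian unitaries\<close>

lemma block_matrices_H0:
  fixes H K Z T V :: "complex mat"
  assumes H: "H \<in> H0 p" and K: "hermitian_mat q K" and Z: "unitary_mat q Z"
    and T: "T \<in> carrier_mat (p + q) q" "adj T * T = 1\<^sub>m q"
    and V: "V \<in> carrier_mat (p + q) p" "adj V * V = 1\<^sub>m p"
  defines "A \<equiv> dsum (V * H * adj V) (0\<^sub>m q q)"
    and "B \<equiv> dsum (T * K * adj T) (- (adj Z * K * Z))"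
    and "C \<equiv> four_block_mat (0\<^sub>m (p + q) (p + q)) (T * Z) (adj Z * adj T) (0\<^sub>m q q)"
  shows "A \<in> H0 (p + q + q)" "B \<in> H0 (p + q + q)" "C \<in> H0 (p + q + q)"
proof -
  have H': "hermitian_mat p H" "mtrace H = 0" and Kc: "K \<in> carrier_mat q q"
    and Z': "adj Z \<in> carrier_mat q q" "adj (adj Z) * adj Z = 1\<^sub>m q"
    using H K Z unfolding H0_def hermitian_mat_def unitary_mat_def by auto
  show "A \<in> H0 (p + q + q)"
    unfolding A_def using H' V
    by (intro dsum_H0 hermitian_conj) (auto simp: hermitian_mat_def mtrace_conj_isometry)
  have herm: "hermitian_mat (p + q) (T * K * adj T)" "hermitian_mat q (- (adj Z * K * Z))"
    using hermitian_conj[OF K T(1)] hermitian_conj[OF K Z'(1)] by (simp_all add: hermitian_uminus)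
  have "adj Z * K * Z \<in> carrier_mat q q"
    using Kc Z' by (metis adj_adj adj_carrier_mat mult_carrier_mat)
  then have "mtrace (T * K * adj T) + mtrace (- (adj Z * K * Z)) = 0"
    using mtrace_conj_isometry[OF Kc T] mtrace_conj_isometry[OF Kc Z'] by (simp add: mtrace_uminus)
  with herm show "B \<in> H0 (p + q + q)"
    unfolding B_def by (intro dsum_H0)
  have Zc: "Z \<in> carrier_mat q q"
    using Z unfolding unitary_mat_def by simp
  from antidiag_H0[OF mult_carrier_mat[OF T(1) Zc]] show "C \<in> H0 (p + q + q)"
    unfolding C_def using T Zc by (simp add: adj_mult)
qed

lemma block_matrices_products:
  fixes H K Z T V :: "complex mat"
  assumes H: "H \<in> carrier_mat p p" "H * H = 1\<^sub>m p"
    and K: "K \<in> carrier_mat q q" "K * K = 1\<^sub>m q"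
    and Z: "unitary_mat q Z"
    and T: "T \<in> carrier_mat (p + q) q" and V: "V \<in> carrier_mat (p + q) p"
    and VT: "unitary_mat (p + q) (hcat V T)"
  defines "A \<equiv> dsum (V * H * adj V) (0\<^sub>m q q)"
    and "B \<equiv> dsum (T * K * adj T) (- (adj Z * K * Z))"
    and "C \<equiv> four_block_mat (0\<^sub>m (p + q) (p + q)) (T * Z) (adj Z * adj T) (0\<^sub>m q q)"
  shows "A * A + B * B = 1\<^sub>m (p + q + q)" "C * C = B * B"
    "A * B = 0\<^sub>m (p + q + q) (p + q + q)" "B * A = 0\<^sub>m (p + q + q) (p + q + q)"
    "A * C = 0\<^sub>m (p + q + q) (p + q + q)" "C * A = 0\<^sub>m (p + q + q) (p + q + q)"
    "B * C + C * B = 0\<^sub>m (p + q + q) (p + q + q)"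
proof -
  note cols = unitary_hcat_columns[OF V T VT]
  have Z: "Z \<in> carrier_mat q q" "adj Z * Z = 1\<^sub>m q" "Z * adj Z = 1\<^sub>m q"
    using Z unfolding unitary_mat_def by auto
  note rw = mult_assoc_dims mult_cancel_inverse_left[OF cols(1)] mult_cancel_inverse_left[OF cols(4)]
    mult_cancel_inverse_left[OF H(2)] mult_cancel_inverse_left[OF K(2)]
    mult_cancel_inverse_left[OF Z(2)] mult_cancel_inverse_left[OF Z(3)]
    mult_cancel_annihilator_left[OF cols(2)] mult_cancel_annihilator_left[OF cols(3)]
    cols H(2) K(2) Z(2,3) carrier_matD[OF H(1)] carrier_matD[OF K(1)] carrier_matD[OF Z(1)]
    carrier_matD[OF T] carrier_matD[OF V]
  have c: "V * H * adj V \<in> carrier_mat (p + q) (p + q)" "T * K * adj T \<in> carrier_mat (p + q) (p + q)"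
    "- (adj Z * K * Z) \<in> carrier_mat q q" "T * Z \<in> carrier_mat (p + q) q" "adj Z * adj T \<in> carrier_mat q (p + q)"
    using H K Z T V by (meson adj_carrier_mat mult_carrier_mat uminus_carrier_mat)+
  note z = zero_carrier_mat
  have AA: "A * A = dsum (V * adj V) (0\<^sub>m q q)"
    unfolding A_def mult_dsum[OF c(1) z c(1) z] by (simp add: rw)
  have BB: "B * B = dsum (T * adj T) (1\<^sub>m q)"
    unfolding B_def mult_dsum[OF c(2) c(3) c(2) c(3)] by (simp add: rw)
  show "A * A + B * B = 1\<^sub>m (p + q + q)"
    using V T unfolding AA BB
    by (simp add: add_dsum[of _ "p + q" _ q] unitary_hcat_rows[OF V T VT] dsum_one)
  show "C * C = B * B"
    unfolding C_def BB mult_antidiag_antidiag[OF c(4) c(5) c(4) c(5)] by (simp add: rw)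
  show "A * B = 0\<^sub>m (p + q + q) (p + q + q)"
    unfolding A_def B_def mult_dsum[OF c(1) z c(2) c(3)] by (simp add: rw dsum_zero)
  show "B * A = 0\<^sub>m (p + q + q) (p + q + q)"
    unfolding A_def B_def mult_dsum[OF c(2) c(3) c(1) z] by (simp add: rw dsum_zero)
  show "A * C = 0\<^sub>m (p + q + q) (p + q + q)"
    unfolding A_def C_def mult_dsum_antidiag[OF c(1) z c(4) c(5)] by (simp add: rw)
  show "C * A = 0\<^sub>m (p + q + q) (p + q + q)"
    unfolding A_def C_def mult_antidiag_dsum[OF c(1) z c(4) c(5)] by (simp add: rw)
  show "B * C + C * B = 0\<^sub>m (p + q + q) (p + q + q)"
    unfolding B_def C_def mult_dsum_antidiag[OF c(2) c(3) c(4) c(5)] mult_antidiag_dsum[OF c(2) c(3) c(4) c(5)]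
      add_antidiag[OF mult_carrier_mat[OF c(2) c(4)] mult_carrier_mat[OF c(3) c(5)]
        mult_carrier_mat[OF c(4) c(3)] mult_carrier_mat[OF c(5) c(2)]]
    by (simp add: rw add_uminus_cancel_mat uminus_add_cancel_mat)
qed

lemma index_mult_lincomb:
  fixes x y :: complex
  assumes "X1 \<in> carrier_mat n n" "X2 \<in> carrier_mat n n" "X3 \<in> carrier_mat n n"
    "Y1 \<in> carrier_mat n n" "Y2 \<in> carrier_mat n n" "Y3 \<in> carrier_mat n n" "i < n" "j < n"
  shows "((X1 + x \<cdot>\<^sub>m X2 + y \<cdot>\<^sub>m X3) * (Y1 + x \<cdot>\<^sub>m Y2 + y \<cdot>\<^sub>m Y3)) $$ (i, j)
    = (X1 * Y1) $$ (i, j) + x * ((X1 * Y2) $$ (i, j) + (X2 * Y1) $$ (i, j))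
      + y * ((X1 * Y3) $$ (i, j) + (X3 * Y1) $$ (i, j))
      + x * x * (X2 * Y2) $$ (i, j) + y * y * (X3 * Y3) $$ (i, j)
      + x * y * ((X2 * Y3) $$ (i, j) + (X3 * Y2) $$ (i, j))"
  using assms by (simp add: scalar_prod_def algebra_simps sum.distrib sum_distrib_left)

lemma circle_combination_IH0:
  fixes x y :: real
  assumes A: "A \<in> H0 n" and B: "B \<in> H0 n" and C: "C \<in> H0 n"
    and AB_sq: "A * A + B * B = 1\<^sub>m n" and CB_sq: "C * C = B * B"
    and AB: "A * B = 0\<^sub>m n n" "B * A = 0\<^sub>m n n" and AC: "A * C = 0\<^sub>m n n" "C * A = 0\<^sub>m n n"
    and BC: "B * C + C * B = 0\<^sub>m n n"
    and circle: "x\<^sup>2 + y\<^sup>2 = 1"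
  shows "A + complex_of_real x \<cdot>\<^sub>m B + complex_of_real y \<cdot>\<^sub>m C \<in> IH0 n"
proof -
  define M where "M = A + complex_of_real x \<cdot>\<^sub>m B + complex_of_real y \<cdot>\<^sub>m C"
  have c: "A \<in> carrier_mat n n" "B \<in> carrier_mat n n" "C \<in> carrier_mat n n"
    using A B C by (simp_all add: H0_def hermitian_mat_def)
  have M: "M \<in> H0 n"
    using A B C c unfolding M_def H0_def hermitian_mat_def
    by (simp add: adj_add adj_smult mtrace_add[of _ n] mtrace_smult[of _ n])
  have "M * M = 1\<^sub>m n"
  proof (rule eq_matI)
    fix i j assume "i < dim_row (1\<^sub>m n :: complex mat)" "j < dim_col (1\<^sub>m n :: complex mat)"
    then have ij: "i < n" "j < n" by simp_all
    have xy: "complex_of_real x * complex_of_real x + complex_of_real y * complex_of_real y = 1"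
      using circle by (metis of_real_add of_real_mult of_real_1 power2_eq_square)
    have sq: "(A * A) $$ (i, j) + (B * B) $$ (i, j) = 1\<^sub>m n $$ (i, j)"
      using arg_cong[OF AB_sq, of "\<lambda>X. X $$ (i, j)"] ij c by simp
    have anti: "(B * C) $$ (i, j) + (C * B) $$ (i, j) = 0"
      using arg_cong[OF BC, of "\<lambda>X. X $$ (i, j)"] ij c by simp
    have "(M * M) $$ (i, j) = (A * A) $$ (i, j)
        + complex_of_real x * complex_of_real x * (B * B) $$ (i, j)
        + complex_of_real y * complex_of_real y * (B * B) $$ (i, j)
        + complex_of_real x * complex_of_real y * ((B * C) $$ (i, j) + (C * B) $$ (i, j))"
      unfolding M_def index_mult_lincomb[OF c c ij] using ij by (simp add: AB AC CB_sq)
    also have "\<dots> = (A * A) $$ (i, j)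
        + (complex_of_real x * complex_of_real x + complex_of_real y * complex_of_real y) * (B * B) $$ (i, j)"
      unfolding anti by (simp add: algebra_simps)
    finally show "(M * M) $$ (i, j) = 1\<^sub>m n $$ (i, j)"
      unfolding xy using sq by simp
  qed (use c in \<open>simp_all add: M_def\<close>)
  with M show ?thesis
    unfolding M_def[symmetric] IH0_def unitary_mat_def H0_def hermitian_mat_def by simp
qed

lemma quadratic_constant_on_circle:
  fixes a s t b c u d :: complex
  assumes circ: "\<And>x y :: real. x\<^sup>2 + y\<^sup>2 = 1 \<Longrightarrow>
    a + of_real x * s + of_real y * t + of_real x * of_real x * b + of_real y * of_real y * c
      + of_real x * of_real y * u = d"
  shows "c = b" "b = d - a" "u = 0"
proof -
  \<comment> \<open>the rational point (3/5, 4/5) has x y \<noteq> 0 and so detects u\<close>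
  have "a + s + b = d" "a - s + b = d" "a + t + c = d" "a - t + c = d"
    and "a + 3/5 * s + 4/5 * t + 9/25 * b + 16/25 * c + 12/25 * u = d"
    using circ[of 1 0] circ[of "-1" 0] circ[of 0 1] circ[of 0 "-1"] circ[of "3/5" "4/5"]
    by (simp_all add: power2_eq_square field_simps)
  then show "c = b" "b = d - a" "u = 0"
    by (auto simp: algebra_simps)
qed

lemma unitary_circle_abs_sq:
  assumes a: "a \<in> carrier_mat m m" and b: "b \<in> carrier_mat m m" and c: "c \<in> carrier_mat m m"
    and unitary: "\<And>x y :: real. x\<^sup>2 + y\<^sup>2 = 1 \<Longrightarrow>
      unitary_mat m (a + complex_of_real x \<cdot>\<^sub>m b + complex_of_real y \<cdot>\<^sub>m c)"
  shows "abs_sq c = abs_sq b" "abs_sq b = 1\<^sub>m m - abs_sq a" "re_mat (adj b * c) = 0\<^sub>m m m"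
proof -
  have expansion: "(adj a * a) $$ (i, j) + complex_of_real x * ((adj a * b) $$ (i, j) + (adj b * a) $$ (i, j))
      + complex_of_real y * ((adj a * c) $$ (i, j) + (adj c * a) $$ (i, j))
      + complex_of_real x * complex_of_real x * (adj b * b) $$ (i, j)
      + complex_of_real y * complex_of_real y * (adj c * c) $$ (i, j)
      + complex_of_real x * complex_of_real y * ((adj b * c) $$ (i, j) + (adj c * b) $$ (i, j))
      = 1\<^sub>m m $$ (i, j)" if ij: "i < m" "j < m" and circle: "x\<^sup>2 + y\<^sup>2 = 1" for i j x y
  proof -
    have "adj (a + complex_of_real x \<cdot>\<^sub>m b + complex_of_real y \<cdot>\<^sub>m c)
        * (a + complex_of_real x \<cdot>\<^sub>m b + complex_of_real y \<cdot>\<^sub>m c) = 1\<^sub>m m"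
      using unitary[OF circle] unfolding unitary_mat_def by blast
    moreover have "adj (a + complex_of_real x \<cdot>\<^sub>m b + complex_of_real y \<cdot>\<^sub>m c)
        = adj a + complex_of_real x \<cdot>\<^sub>m adj b + complex_of_real y \<cdot>\<^sub>m adj c"
      using a b c by (intro eq_matI) auto
    ultimately have "((adj a + complex_of_real x \<cdot>\<^sub>m adj b + complex_of_real y \<cdot>\<^sub>m adj c)
        * (a + complex_of_real x \<cdot>\<^sub>m b + complex_of_real y \<cdot>\<^sub>m c)) $$ (i, j) = 1\<^sub>m m $$ (i, j)"
      by simp
    then show ?thesis
      by (subst (asm) index_mult_lincomb[OF adj_carrier_mat[OF a] adj_carrier_mat[OF b]
          adj_carrier_mat[OF c] a b c ij])
  qed
  have coeffs: "(adj c * c) $$ (i, j) = (adj b * b) $$ (i, j)"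
      "(adj b * b) $$ (i, j) = 1\<^sub>m m $$ (i, j) - (adj a * a) $$ (i, j)"
      "(adj b * c) $$ (i, j) + (adj c * b) $$ (i, j) = 0"
    if "i < m" "j < m" for i j
    using quadratic_constant_on_circle[OF expansion[OF that]] by simp_all
  show "abs_sq c = abs_sq b" "abs_sq b = 1\<^sub>m m - abs_sq a"
    unfolding abs_sq_def using a b c coeffs(1,2) by (auto intro!: eq_matI)
  have "re_mat (adj b * c) = (1 / 2) \<cdot>\<^sub>m (adj b * c + adj c * b)"
    using b c by (simp add: re_mat_def adj_mult)
  then show "re_mat (adj b * c) = 0\<^sub>m m m"
    using b c coeffs(3) by (auto intro!: eq_matI)
qed

theorem lemma3p9:
  fixes k m :: nat and \<phi> :: "complex mat \<Rightarrow> complex mat"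
    and H K Z T V :: "complex mat"
  assumes "k \<ge> 2"
    and lin: "real_linear_on_H0 (2*k) m \<phi>"
    and unit: "\<forall>A \<in> IH0 (2*k). unitary_mat m (\<phi> A)"
    and H: "H \<in> IH0 (2*(k-2))"
    and K: "hermitian_mat 2 K" "unitary_mat 2 K"
    and Z: "unitary_mat 2 Z"
    and T: "T \<in> carrier_mat (2*(k-1)) 2"
    and V: "V \<in> carrier_mat (2*(k-1)) (2*(k-2))"
    and VT: "unitary_mat (2*(k-1)) (hcat V T)"
  shows "abs_sq (\<phi> (four_block_mat (0\<^sub>m (2*(k-1)) (2*(k-1))) (T * Z) (adj Z * adj T) (0\<^sub>m 2 2)))
           = abs_sq (\<phi> (dsum (T * K * adj T) (- (adj Z * K * Z))))
       \<and> abs_sq (\<phi> (dsum (T * K * adj T) (- (adj Z * K * Z))))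
           = 1\<^sub>m m - abs_sq (\<phi> (dsum (V * H * adj V) (0\<^sub>m 2 2)))
       \<and> re_mat (adj (\<phi> (dsum (T * K * adj T) (- (adj Z * K * Z))))
                 * \<phi> (four_block_mat (0\<^sub>m (2*(k-1)) (2*(k-1))) (T * Z) (adj Z * adj T) (0\<^sub>m 2 2)))
           = 0\<^sub>m m m"
proof -
  define p where "p = 2 * (k - 2)"
  have dims: "2 * (k - 1) = p + 2" "2 * k = p + 2 + 2"
    using \<open>k \<ge> 2\<close> unfolding p_def by simp_all
  have H': "H \<in> H0 p" "H \<in> carrier_mat p p" "H * H = 1\<^sub>m p"
    using H unfolding p_def IH0_def H0_def hermitian_mat_def unitary_mat_def by auto
  have K': "K \<in> carrier_mat 2 2" "K * K = 1\<^sub>m 2"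
    using K unfolding hermitian_mat_def unitary_mat_def by auto
  have T': "T \<in> carrier_mat (p + 2) 2" and V': "V \<in> carrier_mat (p + 2) p"
    and VT': "unitary_mat (p + 2) (hcat V T)"
    using T V VT unfolding dims p_def by simp_all
  note cols = unitary_hcat_columns[OF V' T' VT']
  define A where "A = dsum (V * H * adj V) (0\<^sub>m 2 2)"
  define B where "B = dsum (T * K * adj T) (- (adj Z * K * Z))"
  define C where "C = four_block_mat (0\<^sub>m (p + 2) (p + 2)) (T * Z) (adj Z * adj T) (0\<^sub>m 2 2)"
  note H0_ABC = block_matrices_H0[OF H'(1) K(1) Z T' cols(4) V' cols(1), folded A_def B_def C_def]
  note relations = block_matrices_products[OF H'(2,3) K' Z T' V' VT', folded A_def B_def C_def]
  have lin': "real_linear_on_H0 (p + 2 + 2) m \<phi>" and unit': "\<forall>A \<in> IH0 (p + 2 + 2). unitary_mat m (\<phi> A)"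
    using lin unit unfolding dims by simp_all
  have unitary: "unitary_mat m (\<phi> A + complex_of_real x \<cdot>\<^sub>m \<phi> B + complex_of_real y \<cdot>\<^sub>m \<phi> C)"
    if "x\<^sup>2 + y\<^sup>2 = 1" for x y
  proof -
    have "A + complex_of_real x \<cdot>\<^sub>m B + complex_of_real y \<cdot>\<^sub>m C \<in> IH0 (p + 2 + 2)"
      using circle_combination_IH0[OF H0_ABC relations that] .
    then have "unitary_mat m (\<phi> (A + complex_of_real x \<cdot>\<^sub>m B + complex_of_real y \<cdot>\<^sub>m C))"
      using unit' by blast
    then show ?thesis
      by (simp only: real_linear_on_H0_lincomb[OF lin' H0_ABC])
  qed
  have carrier: "\<phi> A \<in> carrier_mat m m" "\<phi> B \<in> carrier_mat m m" "\<phi> C \<in> carrier_mat m m"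
    using lin' H0_ABC unfolding real_linear_on_H0_def by simp_all
  from unitary_circle_abs_sq[OF carrier unitary] show ?thesis
    unfolding dims(1) A_def B_def C_def by (intro conjI)
qed

end
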